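(* Let $s\geq 2$ be an even integer, let $m\geq 3$ be an integer, let $t\geq 1$ be an integer, and let $n$ be an integer with $n\geq \left(\frac{sm}{2}-1\right)(2sm-1)+1$. Then $$R(tP_n,J_{s,m})=tn+\frac{sm}{2}-1.$$
   Context: All graphs are finite and simple. For graphs $G$ and $H$, the Ramsey number $R(G,H)$ is the least natural number $N$ such that for every graph $F$ on $N$ vertices, either $F$ contains $G$ as a subgraph or the complement $\overline{F}$ contains $H$ as a subgraph. $P_n$ denotes the path on $n$ vertices, and $tP_n$ denotes the disjoint union of $t$ copies of $P_n$. For integers $s,m\geq 2$, the generalized Jahangir graph $J_{s,m}$ is the graph on $sm+1$ vertices consisting of a cycle $C_{sm}=v_1v_2\cdots v_{sm}v_1$ together with one additional vertex adjacent to exactly the $m$ cycle vertices $v_1, v_{s+1}, v_{2s+1},\ldots,v_{(m-1)s+1}$ (i.e., $m$ vertices of the cycle at distance $s$ from each other along the cycle). *)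

theory Defs
  imports Main
begin

text \<open>A finite simple graph is given by a finite vertex set and a symmetric,
irreflexive adjacency relation (only its restriction to the vertex set matters).\<close>

definition simple_graph :: "'a set \<Rightarrow> ('a \<Rightarrow> 'a \<Rightarrow> bool) \<Rightarrow> bool" where
  "simple_graph V E \<longleftrightarrow> finite V \<and> (\<forall>u v. E u v \<longrightarrow> E v u) \<and> (\<forall>u. \<not> E u u)"

definition contains_subgraph ::
  "'a set \<Rightarrow> ('a \<Rightarrow> 'a \<Rightarrow> bool) \<Rightarrow> 'b set \<Rightarrow> ('b \<Rightarrow> 'b \<Rightarrow> bool) \<Rightarrow> bool" where
  "contains_subgraph V E W D \<longleftrightarrow>
     (\<exists>f. inj_on f W \<and> f ` W \<subseteq> V \<and> (\<forall>x\<in>W. \<forall>y\<in>W. D x y \<longrightarrow> E (f x) (f y)))"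

definition compl_graph :: "('a \<Rightarrow> 'a \<Rightarrow> bool) \<Rightarrow> 'a \<Rightarrow> 'a \<Rightarrow> bool" where
  "compl_graph E u v \<longleftrightarrow> u \<noteq> v \<and> \<not> E u v"

definition ramsey_arrows ::
  "nat \<Rightarrow> 'b set \<Rightarrow> ('b \<Rightarrow> 'b \<Rightarrow> bool) \<Rightarrow> 'c set \<Rightarrow> ('c \<Rightarrow> 'c \<Rightarrow> bool) \<Rightarrow> bool" where
  "ramsey_arrows N VG EG VH EH \<longleftrightarrow>
     (\<forall>E :: nat \<Rightarrow> nat \<Rightarrow> bool. simple_graph {0..<N} E \<longrightarrow>
        contains_subgraph {0..<N} E VG EG \<or> contains_subgraph {0..<N} (compl_graph E) VH EH)"

definition ramsey_number ::
  "'b set \<Rightarrow> ('b \<Rightarrow> 'b \<Rightarrow> bool) \<Rightarrow> 'c set \<Rightarrow> ('c \<Rightarrow> 'c \<Rightarrow> bool) \<Rightarrow> nat" where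
  "ramsey_number VG EG VH EH = (LEAST N. ramsey_arrows N VG EG VH EH)"

text \<open>t P_n: vertices (a,i) with a < t, i < n; the a-th copy is the path (a,0)(a,1)...(a,n-1).\<close>
definition tP_verts :: "nat \<Rightarrow> nat \<Rightarrow> (nat \<times> nat) set" where
  "tP_verts t n = {0..<t} \<times> {0..<n}"

definition tP_edge :: "nat \<times> nat \<Rightarrow> nat \<times> nat \<Rightarrow> bool" where
  "tP_edge x y \<longleftrightarrow> fst x = fst y \<and> (snd x + 1 = snd y \<or> snd y + 1 = snd x)"

text \<open>Generalized Jahangir graph J_{s,m}: cycle vertices 0..s*m-1 (vertex k is v_{k+1}),
  cycle edges k ~ (k+1) mod (s*m), plus the extra vertex s*m adjacent to the cycle vertices
  k with s dvd k, i.e. v_1, v_{s+1}, ..., v_{(m-1)s+1}.\<close>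
definition jahangir_verts :: "nat \<Rightarrow> nat \<Rightarrow> nat set" where
  "jahangir_verts s m = {0..s*m}"

definition jahangir_edge :: "nat \<Rightarrow> nat \<Rightarrow> nat \<Rightarrow> nat \<Rightarrow> bool" where
  "jahangir_edge s m u v \<longleftrightarrow>
     (u < s*m \<and> v < s*m \<and> (v = (u + 1) mod (s*m) \<or> u = (v + 1) mod (s*m))) \<or>
     (u = s*m \<and> v < s*m \<and> s dvd v) \<or>
     (v = s*m \<and> u < s*m \<and> s dvd u)"

end

theory Submission
  imports Defs
begin

text \<open>Write k = sm/2. Since s is even, J_{s,m} is bipartite with sides of sizes k (the even cycle
  vertices) and k + 1 (the odd cycle vertices and the centre), so it lies in the complement of F as
  soon as F has an anticomplete pair of vertex sets of sizes k and k + 1. If F has no such pair,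
  every set of at least n + k - 1 vertices spans a path on n vertices. When the longest path is
  short, endpoints of longest paths have degree at most k, and greedily collecting such endpoints
  produces the forbidden pair. When it is long, k vertices off the path can be attached to at most
  k(k - 1) consecutive pairs of path vertices (otherwise the path would extend), which leaves k + 1
  path vertices without neighbours among them. Removing paths one at a time gives t P_n on
  tn + k - 1 vertices. The bound is sharp: disjoint cliques on tn - 1 and k - 1 vertices contain no
  t P_n, and their complement contains no J_{s,m}, because every proper 2-colouring of J_{s,m} has
  at least k vertices of each colour.\<close>

section \<open>Longest paths\<close>

definition is_path :: "('a \<Rightarrow> 'a \<Rightarrow> bool) \<Rightarrow> 'a set \<Rightarrow> 'a list \<Rightarrow> bool" where
  "is_path E V xs \<longleftrightarrow> distinct xs \<and> set xs \<subseteq> V \<and> successively E xs"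

definition longest_path :: "('a \<Rightarrow> 'a \<Rightarrow> bool) \<Rightarrow> 'a set \<Rightarrow> 'a list \<Rightarrow> bool" where
  "longest_path E V xs \<longleftrightarrow> is_path E V xs \<and> (\<forall>ys. is_path E V ys \<longrightarrow> length ys \<le> length xs)"

lemma is_path_take: "is_path E V xs \<Longrightarrow> is_path E V (take n xs)"
  unfolding is_path_def using successively_append_iff[of E "take n xs" "drop n xs"]
  by (auto dest: in_set_takeD)

lemma is_path_mono: "is_path E R xs \<Longrightarrow> R \<subseteq> V \<Longrightarrow> is_path E V xs"
  unfolding is_path_def by blast

lemma is_path_length_le_card: "finite V \<Longrightarrow> is_path E V xs \<Longrightarrow> length xs \<le> card V"
  unfolding is_path_def by (metis card_mono distinct_card)

lemma longest_path_exists: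
  assumes "finite V"
  obtains xs where "longest_path E V xs"
proof -
  have "is_path E V []" by (simp add: is_path_def)
  moreover have "\<forall>ys. is_path E V ys \<longrightarrow> length ys < Suc (card V)"
    using is_path_length_le_card[OF assms] by (simp add: less_Suc_eq_le)
  ultimately obtain xs where "is_path E V xs" "\<forall>ys. is_path E V ys \<longrightarrow> length ys \<le> length xs"
    using ex_has_greatest_nat[of "is_path E V" "[]" length "Suc (card V)"] by blast
  then show ?thesis using that unfolding longest_path_def by blast
qed

lemma longest_path_nonempty:
  assumes "longest_path E V xs" "v \<in> V"
  shows "xs \<noteq> []"
proof -
  have "is_path E V [v]" using assms(2) by (simp add: is_path_def)
  then show ?thesis using assms(1) unfolding longest_path_def by force
qed

lemma longest_path_hd_neighbour:
  assumes "longest_path E V xs" "xs \<noteq> []" "symp E" "u \<in> V" "E (hd xs) u"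
  shows "u \<in> set xs"
proof (rule ccontr)
  assume "u \<notin> set xs"
  moreover have "E u (hd xs)" using assms(3,5) by (rule sympD)
  ultimately have "is_path E V (u # xs)"
    using assms(1,2,4) by (simp add: longest_path_def is_path_def successively_Cons)
  then show False using assms(1) unfolding longest_path_def by (meson impossible_Cons)
qed

lemma successively_converse_symp: "symp E \<Longrightarrow> successively E xs \<Longrightarrow> successively (\<lambda>x y. E y x) xs"
  by (erule successively_mono) (auto dest: sympD)

lemma is_path_rotate:
  assumes "symp E" "is_path E V (P1 @ P2)" "a \<in> V - set (P1 @ P2)" "P1 \<noteq> []" "P2 \<noteq> []"
    "E a (last P1)" "E (hd P1) (hd P2)"
  shows "is_path E V (a # rev P1 @ P2)"
  using assms by (auto simp: is_path_def successively_append_iff successively_Cons hd_rev last_rev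
      intro: successively_converse_symp)

lemma is_path_insert:
  assumes "is_path E V (P1 @ P2)" "a \<in> V - set (P1 @ P2)" "P1 \<noteq> []" "P2 \<noteq> []"
    "E (last P1) a" "E a (hd P2)"
  shows "is_path E V (P1 @ a # P2)"
  using assms by (auto simp: is_path_def successively_append_iff successively_Cons)


lemma is_path_reverse_middle:
  assumes "symp E" "is_path E V (P1 @ P2 @ P3)" "a \<in> V - set (P1 @ P2 @ P3)"
    "a' \<in> V - set (P1 @ P2 @ P3)" "a \<noteq> a'" "P1 \<noteq> []" "P2 \<noteq> []" "P3 \<noteq> []"
    "E (last P1) a" "E a (last P2)" "E (hd P2) a'" "E a' (hd P3)"
  shows "is_path E V (P1 @ a # rev P2 @ a' # P3)"
  using assms by (auto simp: is_path_def successively_append_iff successively_Cons hd_rev last_rev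
      intro: successively_converse_symp)


text \<open>Posa rotation: if the first vertex of a longest path is adjacent to its (i+1)-st vertex,
  reversing the initial segment makes the i-th vertex an endpoint.\<close>

lemma longest_path_rotation:
  assumes "longest_path E V xs" "symp E" "a \<in> V - set xs" "Suc i < length xs"
    "E (hd xs) (xs ! Suc i)"
  shows "\<not> E a (xs ! i)"
proof
  assume "E a (xs ! i)"
  have "last (take (Suc i) xs) = xs ! i" using assms(4) by (simp add: take_Suc_conv_app_nth)
  moreover have "hd (take (Suc i) xs) = hd xs" by (cases xs) auto
  moreover have "hd (drop (Suc i) xs) = xs ! Suc i" using assms(4) by (simp add: hd_drop_conv_nth)
  ultimately have "is_path E V (a # rev (take (Suc i) xs) @ drop (Suc i) xs)"
    using assms \<open>E a (xs ! i)\<close> unfolding longest_path_def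
    by (intro is_path_rotate) auto
  moreover have "length (a # rev (take (Suc i) xs) @ drop (Suc i) xs) > length xs"
    using assms(4) by simp
  ultimately show False using assms(1) unfolding longest_path_def by (meson not_le)
qed


lemma longest_path_no_insertion:
  assumes "longest_path E V xs" "symp E" "a \<in> V - set xs" "Suc i < length xs" "E a (xs ! i)"
  shows "\<not> E a (xs ! Suc i)"
proof
  assume "E a (xs ! Suc i)"
  have "last (take (Suc i) xs) = xs ! i" using assms(4) by (simp add: take_Suc_conv_app_nth)
  moreover have "hd (drop (Suc i) xs) = xs ! Suc i" using assms(4) by (simp add: hd_drop_conv_nth)
  ultimately have "is_path E V (take (Suc i) xs @ a # drop (Suc i) xs)"
    using assms \<open>E a (xs ! Suc i)\<close> unfolding longest_path_def
    by (intro is_path_insert) (auto dest: sympD)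
  moreover have "length (take (Suc i) xs @ a # drop (Suc i) xs) > length xs"
    using assms(4) by simp
  ultimately show False using assms(1) unfolding longest_path_def by (meson not_le)
qed

lemma longest_path_no_crossing:
  assumes "longest_path E V xs" "symp E" "a \<in> V - set xs" "a' \<in> V - set xs" "a \<noteq> a'"
    "i < j" "Suc j < length xs" "E a (xs ! i)" "E a' (xs ! Suc i)" "E a (xs ! j)"
  shows "\<not> E a' (xs ! Suc j)"
proof
  assume "E a' (xs ! Suc j)"
  define P1 where "P1 = take (Suc i) xs"
  define P2 where "P2 = take (j - i) (drop (Suc i) xs)"
  define P3 where "P3 = drop (Suc j) xs"
  have xs: "xs = P1 @ P2 @ P3"
  proof -
    have "drop (j - i) (drop (Suc i) xs) = P3" unfolding P3_def using assms(6) by simp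
    then show ?thesis unfolding P1_def P2_def by (metis append_take_drop_id)
  qed
  have "P1 \<noteq> []" "last P1 = xs ! i"
    unfolding P1_def using assms(6,7) by (simp_all add: take_Suc_conv_app_nth)
  moreover have "P2 \<noteq> []" "hd P2 = xs ! Suc i" "last P2 = xs ! j"
    unfolding P2_def using assms(6,7) by (simp_all add: hd_conv_nth last_conv_nth)
  moreover have "P3 \<noteq> []" "hd P3 = xs ! Suc j" unfolding P3_def using assms(7)
    by (simp_all add: hd_drop_conv_nth)
  moreover have "is_path E V (P1 @ P2 @ P3)" "a \<in> V - set (P1 @ P2 @ P3)" "a' \<in> V - set (P1 @ P2 @ P3)"
    using assms(1,3,4) unfolding longest_path_def xs[symmetric] by simp_all
  ultimately have "is_path E V (P1 @ a # rev P2 @ a' # P3)"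
    using assms(2,5,8,9,10) \<open>E a' (xs ! Suc j)\<close>
    by (intro is_path_reverse_middle) (simp_all add: sympD)
  moreover have "length (P1 @ a # rev P2 @ a' # P3) > length xs"
    using arg_cong[OF xs, of length] by simp
  ultimately show False using assms(1) unfolding longest_path_def by (meson not_le)
qed

section \<open>Long paths in graphs without an anticomplete pair\<close>

definition anticomplete :: "('a \<Rightarrow> 'a \<Rightarrow> bool) \<Rightarrow> 'a set \<Rightarrow> 'a set \<Rightarrow> bool" where
  "anticomplete E A B \<longleftrightarrow> (\<forall>a\<in>A. \<forall>b\<in>B. \<not> E a b)"

definition has_anticomplete_pair :: "('a \<Rightarrow> 'a \<Rightarrow> bool) \<Rightarrow> 'a set \<Rightarrow> nat \<Rightarrow> nat \<Rightarrow> bool" where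
  "has_anticomplete_pair E V p q \<longleftrightarrow>
     (\<exists>A B. A \<subseteq> V \<and> B \<subseteq> V \<and> A \<inter> B = {} \<and> p \<le> card A \<and> q \<le> card B \<and> anticomplete E A B)"

lemma has_anticomplete_pairI:
  "A \<subseteq> V \<Longrightarrow> B \<subseteq> V \<Longrightarrow> A \<inter> B = {} \<Longrightarrow> p \<le> card A \<Longrightarrow> q \<le> card B \<Longrightarrow> anticomplete E A B
   \<Longrightarrow> has_anticomplete_pair E V p q"
  unfolding has_anticomplete_pair_def by metis

lemma has_anticomplete_pair_mono:
  "has_anticomplete_pair E R p q \<Longrightarrow> R \<subseteq> V \<Longrightarrow> has_anticomplete_pair E V p q"
  unfolding has_anticomplete_pair_def by (meson order_trans)

lemma longest_path_hd_degree:
  assumes "finite V" "symp E" "irreflp E" "longest_path E V xs" "xs \<noteq> []"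
    "length xs + k \<le> card V" "\<not> has_anticomplete_pair E V k (Suc k)"
  shows "card {u \<in> V. E (hd xs) u} \<le> k"
proof -
  have path: "distinct xs" "set xs \<subseteq> V"
    using assms(4) unfolding longest_path_def is_path_def by blast+
  define I where "I = {i. Suc i < length xs \<and> E (hd xs) (xs ! Suc i)}"
  have "finite I" unfolding I_def by (rule finite_subset[of _ "{..<length xs}"]) auto
  have "{u \<in> V. E (hd xs) u} \<subseteq> (\<lambda>i. xs ! Suc i) ` I"
  proof
    fix u assume "u \<in> {u \<in> V. E (hd xs) u}"
    then have u: "u \<in> V" "E (hd xs) u" by simp_all
    then have "u \<in> set xs" by (rule longest_path_hd_neighbour[OF assms(4,5,2)])
    then obtain j where j: "j < length xs" "u = xs ! j" by (auto simp: in_set_conv_nth)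
    have "u \<noteq> hd xs" using u(2) irreflpD[OF assms(3)] by metis
    then obtain i where "j = Suc i" using j assms(5) by (cases j) (auto simp: hd_conv_nth)
    then show "u \<in> (\<lambda>i. xs ! Suc i) ` I" using j u unfolding I_def by auto
  qed
  then have deg: "card {u \<in> V. E (hd xs) u} \<le> card I"
    using \<open>finite I\<close> by (meson card_image_le card_mono finite_imageI le_trans)
  define B where "B = (\<lambda>i. xs ! i) ` I"
  have "inj_on (\<lambda>i. xs ! i) I" using path(1) unfolding I_def inj_on_def
    by (auto simp: nth_eq_iff_index_eq)
  then have "card B = card I" unfolding B_def by (rule card_image)
  moreover have "B \<subseteq> set xs" unfolding B_def I_def by auto
  moreover have "k \<le> card (V - set xs)"
    using card_Diff_subset[OF finite_subset[OF path(2) assms(1)] path(2)]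
      distinct_card[OF path(1)] assms(6) by linarith
  moreover have "anticomplete E (V - set xs) B"
    unfolding anticomplete_def B_def I_def
    using longest_path_rotation[OF assms(4,2)] by blast
  ultimately have "\<not> Suc k \<le> card I"
    using assms(7) path(2) has_anticomplete_pairI[of "V - set xs" V B k "Suc k" E] by auto
  with deg show ?thesis by linarith
qed

lemma low_degree_vertex_exists:
  assumes "finite R" "symp E" "irreflp E" "R \<noteq> {}" "\<forall>ys. is_path E R ys \<longrightarrow> length ys \<le> L"
    "L + k \<le> card R" "\<not> has_anticomplete_pair E R k (Suc k)"
  shows "\<exists>v\<in>R. card {u \<in> R. E v u} \<le> k"
proof -
  obtain xs where xs: "longest_path E R xs" using longest_path_exists[OF assms(1)] .
  obtain v where "v \<in> R" using assms(4) by blast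
  with xs have "xs \<noteq> []" by (rule longest_path_nonempty)
  then have "hd xs \<in> R" using xs unfolding longest_path_def is_path_def by auto
  moreover have "length xs + k \<le> card R" using xs assms(5,6) unfolding longest_path_def by force
  ultimately show ?thesis
    using longest_path_hd_degree[OF assms(1,2,3) xs \<open>xs \<noteq> []\<close> _ assms(7)] by blast
qed

lemma card_minus_closed_neighbourhood:
  assumes "finite R" "card {u \<in> R. E v u} \<le> k"
  shows "card R \<le> card (R - insert v {u \<in> R. E v u}) + Suc k"
proof -
  have "card (insert v {u \<in> R. E v u}) \<le> Suc k"
    using assms by (simp add: card_insert_if)
  moreover have "card R - card (insert v {u \<in> R. E v u}) \<le> card (R - insert v {u \<in> R. E v u})"
    using assms(1) by (simp add: diff_card_le_card_Diff)
  ultimately show ?thesis by linarith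
qed

text \<open>Greedy: repeatedly pick a vertex of degree at most k, move it to A and delete it together
  with its neighbourhood from R. Each round costs k + 1 vertices of R, so after k rounds R still
  has k + 1 vertices and A, R form an anticomplete pair.\<close>

lemma anticomplete_pair_if_paths_short:
  assumes "finite V" "symp E" "irreflp E" "\<forall>ys. is_path E V ys \<longrightarrow> length ys \<le> L"
    "k * k + k + L \<le> card V + 1" "(k + 1) * (k + 1) \<le> card V"
  shows "has_anticomplete_pair E V k (Suc k)"
proof (rule ccontr)
  assume no_pair: "\<not> has_anticomplete_pair E V k (Suc k)"
  have "\<exists>A R. A \<subseteq> V \<and> R \<subseteq> V \<and> A \<inter> R = {} \<and> card A = j \<and> card V \<le> card R + j * (k + 1)
      \<and> anticomplete E A R" if "j \<le> k" for j
    using that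
  proof (induction j)
    case 0
    show ?case by (rule exI[of _ "{}"], rule exI[of _ V]) (simp add: anticomplete_def)
  next
    case (Suc j)
    then obtain A R where AR: "A \<subseteq> V" "R \<subseteq> V" "A \<inter> R = {}" "card A = j"
      "card V \<le> card R + j * (k + 1)" "anticomplete E A R" by auto
    have "Suc j * (k + 1) \<le> k * (k + 1)" by (rule mult_le_mono1) (use Suc in auto)
    then have cR: "L + k \<le> card R" using AR(5) assms(5) by (simp add: algebra_simps)
    have finR: "finite R" using AR(2) assms(1) finite_subset by blast
    have "R \<noteq> {}" using cR Suc.prems finR by auto
    moreover have "\<forall>ys. is_path E R ys \<longrightarrow> length ys \<le> L"
      using assms(4) AR(2) is_path_mono by blast
    moreover have "\<not> has_anticomplete_pair E R k (Suc k)"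
      using no_pair AR(2) has_anticomplete_pair_mono by blast
    ultimately obtain v where v: "v \<in> R" "card {u \<in> R. E v u} \<le> k"
      using low_degree_vertex_exists[OF finR assms(2,3) _ _ cR] by blast
    define N where "N = insert v {u \<in> R. E v u}"
    define R' where "R' = R - N"
    have cR': "card R \<le> card R' + Suc k"
      using card_minus_closed_neighbourhood[of R E v k] finR v(2) unfolding R'_def N_def by blast
    have "v \<notin> A" using v(1) AR(3) by auto
    moreover have "finite A" using AR(1) assms(1) finite_subset by blast
    ultimately have "card (insert v A) = Suc j" using AR(4) by simp
    moreover have "insert v A \<subseteq> V" "R' \<subseteq> V" "insert v A \<inter> R' = {}"
      using AR(1-3) v(1) unfolding R'_def N_def by auto
    moreover have "card V \<le> card R' + Suc j * (k + 1)" using cR' AR(5) by simp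
    moreover have "anticomplete E (insert v A) R'"
      using AR(6) unfolding anticomplete_def R'_def N_def by auto
    ultimately show ?case by blast
  qed
  then obtain A R where "A \<subseteq> V" "R \<subseteq> V" "A \<inter> R = {}" "card A = k"
      "card V \<le> card R + k * (k + 1)" "anticomplete E A R" using le_refl by meson
  moreover from this have "Suc k \<le> card R" using assms(6) by (simp add: algebra_simps)
  ultimately show False using no_pair has_anticomplete_pairI[of A V R k "Suc k" E] by simp
qed

lemma card_consecutive_pairs:
  fixes S :: "nat set"
  shows "l - 1 \<le> card {i. Suc i < l \<and> i \<in> S \<and> Suc i \<in> S} + 2 * card ({..<l} - S)"
proof -
  define C where "C = {i. Suc i < l \<and> i \<in> S \<and> Suc i \<in> S}"
  define T where "T = {..<l} - S"
  have "{i. Suc i < l} = {..<l - 1}" by auto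
  then have "card {i. Suc i < l} = l - 1" and fin: "finite {i. Suc i < l}" by simp_all
  moreover have sub: "C \<subseteq> {i. Suc i < l}" unfolding C_def by auto
  ultimately have "l - 1 \<le> card C + card ({i. Suc i < l} - C)"
    using card_Diff_subset[OF finite_subset[OF sub fin] sub] card_mono[OF fin sub] by linarith
  have "finite (T \<union> {i. Suc i \<in> T})" by (rule finite_subset[of _ "{..<l}"]) (auto simp: T_def)
  then have "card ({i. Suc i < l} - C) \<le> card (T \<union> {i. Suc i \<in> T})"
    by (rule card_mono) (auto simp: C_def T_def)
  also have "\<dots> \<le> card T + card {i. Suc i \<in> T}" by (rule card_Un_le)
  also have "\<dots> \<le> card T + card T"
  proof -
    have "Suc ` {i. Suc i \<in> T} \<subseteq> T" by auto
    then have "card (Suc ` {i. Suc i \<in> T}) \<le> card T" by (rule card_mono[rotated]) (simp add: T_def)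
    then show ?thesis by (simp add: card_image)
  qed
  finally show ?thesis using \<open>l - 1 \<le> card C + card ({i. Suc i < l} - C)\<close>
    unfolding C_def T_def by linarith
qed

text \<open>For vertices outside a longest path, each pair of consecutive path vertices with neighbours
  in A receives an ordered pair of distinct such neighbours, and distinct positions receive distinct
  pairs: otherwise the path could be lengthened by an insertion or by reversing a middle segment.\<close>

lemma longest_path_consecutive_attachments:
  assumes "longest_path E V xs" "symp E" "finite A" "A \<subseteq> V - set xs"
  defines "S \<equiv> {i. \<exists>a\<in>A. E a (xs ! i)}"
  shows "card {i. Suc i < length xs \<and> i \<in> S \<and> Suc i \<in> S} \<le> card A * card A - card A"
proof -
  define C where "C = {i. Suc i < length xs \<and> i \<in> S \<and> Suc i \<in> S}"
  define P where "P i = {(a, a'). a \<in> A \<and> a' \<in> A \<and> E a (xs ! i) \<and> E a' (xs ! Suc i)}" for i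
  define Off where "Off = A \<times> A - (\<lambda>a. (a, a)) ` A"
  have "\<forall>i\<in>C. \<exists>p. p \<in> P i" unfolding C_def S_def P_def by auto
  then obtain g where g: "\<And>i. i \<in> C \<Longrightarrow> g i \<in> P i" by metis
  have "g ` C \<subseteq> Off"
  proof
    fix p assume "p \<in> g ` C"
    then obtain i where i: "i \<in> C" "p = g i" by blast
    obtain a a' where p: "p = (a, a')" "a \<in> A" "a' \<in> A" "E a (xs ! i)" "E a' (xs ! Suc i)"
      using g[OF i(1)] i(2) unfolding P_def by auto
    have "a \<noteq> a'"
      using longest_path_no_insertion[OF assms(1,2), of a i] p i(1) assms(4) unfolding C_def by auto
    then show "p \<in> Off" using p unfolding Off_def by auto
  qed
  moreover have "inj_on g C"
  proof (rule inj_onI, rule ccontr)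
    have no_common: "g i \<noteq> g j" if ij: "i \<in> C" "j \<in> C" "i < j" for i j
    proof
      assume "g i = g j"
      then obtain a a' where "(a, a') \<in> P i" "(a, a') \<in> P j" using g ij(1,2) by (metis surj_pair)
      moreover have "a \<noteq> a'"
        using longest_path_no_insertion[OF assms(1,2), of a i] calculation ij(1) assms(4)
        unfolding P_def C_def by auto
      ultimately show False
        using longest_path_no_crossing[OF assms(1,2), of a a' i j] ij assms(4)
        unfolding P_def C_def by auto
    qed
    fix i j assume "i \<in> C" "j \<in> C" "g i = g j" "i \<noteq> j"
    then show False using no_common by (metis linorder_neqE_nat)
  qed
  ultimately have "card C \<le> card Off"
    using assms(3) by (metis card_image card_mono finite_Diff finite_cartesian_product Off_def)
  also have "card Off = card A * card A - card A"
    unfolding Off_def using assms(3)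
    by (simp add: card_Diff_subset card_image card_cartesian_product inj_on_def image_subset_iff)
  finally show ?thesis unfolding C_def .
qed

lemma anticomplete_pair_if_longest_path_long:
  assumes "finite V" "symp E" "longest_path E V xs" "length xs + k \<le> card V"
    "k * k + k + 3 \<le> length xs"
  shows "has_anticomplete_pair E V k (Suc k)"
proof -
  have path: "distinct xs" "set xs \<subseteq> V"
    using assms(3) unfolding longest_path_def is_path_def by blast+
  have "k \<le> card (V - set xs)"
    using card_Diff_subset[OF finite_subset[OF path(2) assms(1)] path(2)]
      distinct_card[OF path(1)] assms(4) by linarith
  then obtain A where A: "A \<subseteq> V - set xs" "card A = k" "finite A"
    by (rule obtain_subset_with_card_n)
  define S where "S = {i. \<exists>a\<in>A. E a (xs ! i)}"
  define T where "T = {..<length xs} - S"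
  have "length xs - 1 \<le> k * k - k + 2 * card T"
    using card_consecutive_pairs[of "length xs" S]
      longest_path_consecutive_attachments[OF assms(3,2) A(3,1), unfolded A(2)]
    unfolding S_def T_def by linarith
  moreover have "k \<le> k * k" by simp
  ultimately have "Suc k \<le> card T" using assms(5) by linarith
  define B where "B = (\<lambda>i. xs ! i) ` T"
  have "inj_on (\<lambda>i. xs ! i) T" using path(1) unfolding T_def inj_on_def
    by (auto simp: nth_eq_iff_index_eq)
  then have "card B = card T" unfolding B_def by (rule card_image)
  moreover have "B \<subseteq> set xs" unfolding B_def T_def by auto
  moreover have "anticomplete E A B" unfolding anticomplete_def B_def T_def S_def by auto
  ultimately show ?thesis
    using A path(2) \<open>Suc k \<le> card T\<close> has_anticomplete_pairI[of A V B k "Suc k" E] by auto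
qed

lemma path_of_length_if_no_anticomplete_pair:
  assumes "finite V" "symp E" "irreflp E" "\<not> has_anticomplete_pair E V k (Suc k)"
    "n + k \<le> card V + 1" "2 * (k * k) + 2 * k + 1 \<le> card V"
  shows "\<exists>xs. is_path E V xs \<and> length xs = n"
proof -
  obtain xs where xs: "longest_path E V xs" using longest_path_exists[OF assms(1)] .
  show ?thesis
  proof (cases "n \<le> length xs")
    case True
    then show ?thesis
      using is_path_take[of E V xs n] xs unfolding longest_path_def by (intro exI[of _ "take n xs"]) simp
  next
    case False
    then have "length xs + k \<le> card V" using assms(5) by linarith
    then have "length xs < k * k + k + 3"
      using anticomplete_pair_if_longest_path_long[OF assms(1,2) xs] assms(4) by (meson not_le)
    then have "k * k + k + length xs \<le> card V + 1" using assms(6) by linarith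
    moreover have "(k + 1) * (k + 1) \<le> card V"
      using assms(6) by (simp add: algebra_simps)
    moreover have "\<forall>ys. is_path E V ys \<longrightarrow> length ys \<le> length xs"
      using xs unfolding longest_path_def by blast
    ultimately have "has_anticomplete_pair E V k (Suc k)"
      using anticomplete_pair_if_paths_short[OF assms(1-3)] by blast
    with assms(4) show ?thesis ..
  qed
qed

lemma contains_tP_Suc:
  assumes "symp E" "contains_subgraph (V - set xs) E (tP_verts t n) tP_edge" "is_path E V xs"
    "length xs = n"
  shows "contains_subgraph V E (tP_verts (Suc t) n) tP_edge"
proof -
  obtain f where f: "inj_on f (tP_verts t n)" "f ` tP_verts t n \<subseteq> V - set xs"
    "\<forall>x\<in>tP_verts t n. \<forall>y\<in>tP_verts t n. tP_edge x y \<longrightarrow> E (f x) (f y)"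
    using assms(2) unfolding contains_subgraph_def by blast
  have path: "distinct xs" "set xs \<subseteq> V" "successively E xs"
    using assms(3) unfolding is_path_def by blast+
  define f' where "f' x = (if fst x = t then xs ! snd x else f x)" for x
  have split: "tP_verts (Suc t) n = tP_verts t n \<union> {t} \<times> {0..<n}"
    unfolding tP_verts_def by auto
  have "f' x = f x" if "x \<in> tP_verts t n" for x using that unfolding f'_def tP_verts_def by auto
  then have inj1: "inj_on f' (tP_verts t n)" and img1: "f' ` tP_verts t n \<subseteq> V - set xs"
    using f(1,2) inj_on_cong[of "tP_verts t n" f' f] by auto
  have inj2: "inj_on f' ({t} \<times> {0..<n})"
    using path(1) assms(4) unfolding f'_def inj_on_def by (auto simp: nth_eq_iff_index_eq)
  have img2: "f' ` ({t} \<times> {0..<n}) \<subseteq> set xs" using assms(4) unfolding f'_def by auto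
  have "inj_on f' (tP_verts (Suc t) n)"
    unfolding split inj_on_Un using inj1 inj2 img1 img2 by blast
  moreover have "f' ` tP_verts (Suc t) n \<subseteq> V"
    unfolding split using img1 img2 path(2) by blast
  moreover have "E (f' x) (f' y)" if "x \<in> tP_verts (Suc t) n" "y \<in> tP_verts (Suc t) n"
    "tP_edge x y" for x y
  proof (cases "fst x = t")
    case True
    have "E (xs ! i) (xs ! Suc i)" "E (xs ! Suc i) (xs ! i)" if "Suc i < n" for i
      using successively_nth[OF path(3)] that assms(1,4) by (simp_all add: sympD)
    then show ?thesis
      using True that unfolding f'_def tP_verts_def tP_edge_def by auto
  next
    case False
    then show ?thesis
      using f(3) that unfolding f'_def tP_verts_def tP_edge_def by (auto simp: less_Suc_eq)
  qed
  ultimately show ?thesis unfolding contains_subgraph_def by blast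
qed

lemma contains_tP_if_no_anticomplete_pair:
  assumes "finite V" "symp E" "irreflp E" "\<not> has_anticomplete_pair E V k (Suc k)"
    "t * n + k \<le> card V + 1" "2 * (k * k) + k + 2 \<le> n"
  shows "contains_subgraph V E (tP_verts t n) tP_edge"
  using assms(1,4,5)
proof (induction t arbitrary: V)
  case 0
  show ?case unfolding contains_subgraph_def tP_verts_def by simp
next
  case (Suc t)
  have "n + k \<le> card V + 1" using Suc.prems(3) by simp
  moreover from this have "2 * (k * k) + 2 * k + 1 \<le> card V" using assms(6) by linarith
  ultimately obtain xs where xs: "is_path E V xs" "length xs = n"
    using path_of_length_if_no_anticomplete_pair[OF Suc.prems(1) assms(2,3) Suc.prems(2)] by blast
  have path: "distinct xs" "set xs \<subseteq> V" using xs(1) unfolding is_path_def by blast+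
  have "card (V - set xs) = card V - n"
    using card_Diff_subset[OF finite_subset[OF path(2) Suc.prems(1)] path(2)]
      distinct_card[OF path(1)] xs(2) by simp
  then have "t * n + k \<le> card (V - set xs) + 1" using Suc.prems(3) by simp
  moreover have "\<not> has_anticomplete_pair E (V - set xs) k (Suc k)"
    using Suc.prems(2) has_anticomplete_pair_mono[of E "V - set xs" k "Suc k" V] by auto
  ultimately have "contains_subgraph (V - set xs) E (tP_verts t n) tP_edge"
    using Suc.IH[of "V - set xs"] Suc.prems(1) by simp
  then show ?case by (rule contains_tP_Suc[OF assms(2) _ xs])
qed

section \<open>Embedding the Jahangir graph\<close>

lemma contains_bipartite_in_compl_if_anticomplete_pair:
  fixes E :: "'a \<Rightarrow> 'a \<Rightarrow> bool" and D :: "'b \<Rightarrow> 'b \<Rightarrow> bool"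
  assumes "finite V" "symp E" "finite X" "finite Y" "X \<inter> Y = {}"
    "\<And>x y. x \<in> X \<union> Y \<Longrightarrow> y \<in> X \<union> Y \<Longrightarrow> D x y \<Longrightarrow> x \<in> X \<longleftrightarrow> y \<in> Y"
    "has_anticomplete_pair E V (card X) (card Y)"
  shows "contains_subgraph V (compl_graph E) (X \<union> Y) D"
proof -
  obtain A B where AB: "A \<subseteq> V" "B \<subseteq> V" "A \<inter> B = {}" "card X \<le> card A" "card Y \<le> card B"
    "anticomplete E A B"
    using assms(7) unfolding has_anticomplete_pair_def by auto
  have "finite A" "finite B" using AB(1,2) assms(1) finite_subset by auto
  then obtain g h where g: "g ` X \<subseteq> A" "inj_on g X" and h: "h ` Y \<subseteq> B" "inj_on h Y"
    using card_le_inj[OF assms(3) _ AB(4)] card_le_inj[OF assms(4) _ AB(5)] by metis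
  define f where "f x = (if x \<in> X then g x else h x)" for x
  have fX: "f x = g x" if "x \<in> X" for x using that unfolding f_def by simp
  have fY: "f y = h y" if "y \<in> Y" for y using that assms(5) unfolding f_def by auto
  have "inj_on f X" "inj_on f Y" using g(2) h(2) inj_on_cong[of X f g] inj_on_cong[of Y f h] fX fY
    by auto
  moreover have "f ` X \<subseteq> A" "f ` Y \<subseteq> B" using g(1) h(1) fX fY by auto
  ultimately have "inj_on f (X \<union> Y)" using AB(3) unfolding inj_on_Un by blast
  moreover have "f ` (X \<union> Y) \<subseteq> V" using \<open>f ` X \<subseteq> A\<close> \<open>f ` Y \<subseteq> B\<close> AB(1,2) by blast
  moreover have "compl_graph E (f x) (f y)"
    if "x \<in> X \<union> Y" "y \<in> X \<union> Y" "D x y" for x y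
  proof -
    have "f x \<in> A \<and> f y \<in> B \<or> f x \<in> B \<and> f y \<in> A"
      using assms(6)[OF that] that \<open>f ` X \<subseteq> A\<close> \<open>f ` Y \<subseteq> B\<close> by blast
    then show ?thesis
      using AB(3,6) assms(2) unfolding compl_graph_def anticomplete_def by (auto dest: sympD)
  qed
  ultimately show ?thesis unfolding contains_subgraph_def by blast
qed

lemma even_Suc_mod_double_iff:
  fixes u k :: nat
  assumes "u < 2 * k"
  shows "even ((u + 1) mod (2 * k)) \<longleftrightarrow> odd u"
proof (cases "u + 1 = 2 * k")
  case True
  then show ?thesis by presburger
next
  case False
  with assms show ?thesis by simp
qed

lemma jahangir_in_compl_if_anticomplete_pair:
  assumes "even s" "s * m = 2 * k" "finite V" "symp E" "has_anticomplete_pair E V k (Suc k)"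
  shows "contains_subgraph V (compl_graph E) (jahangir_verts s m) (jahangir_edge s m)"
proof -
  define X where "X = (\<lambda>i. 2 * i) ` {..<k}"
  define Y where "Y = insert (2 * k) ((\<lambda>i. 2 * i + 1) ` {..<k})"
  have X_eq: "X = {j. j < 2 * k \<and> even j}" unfolding X_def by (auto elim!: evenE)
  have Y_eq: "Y = {j. j < 2 * k \<and> odd j} \<union> {2 * k}" unfolding Y_def by (auto elim!: oddE)
  have "card X = k" unfolding X_def by (simp add: card_image inj_on_def)
  moreover have "card Y = Suc k"
  proof -
    have "2 * k \<notin> (\<lambda>i. 2 * i + 1) ` {..<k}" by auto
    then show ?thesis unfolding Y_def by (simp add: card_image inj_on_def)
  qed
  moreover have "jahangir_verts s m = X \<union> Y"
    unfolding jahangir_verts_def assms(2) X_eq Y_eq by auto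
  moreover have "u \<in> X \<longleftrightarrow> v \<in> Y" if "jahangir_edge s m u v" for u v
  proof -
    have "s dvd w \<Longrightarrow> even w" for w using assms(1) by (metis dvd_trans)
    then show ?thesis
      using that even_Suc_mod_double_iff[of u k] even_Suc_mod_double_iff[of v k]
      unfolding jahangir_edge_def assms(2) X_eq Y_eq by auto
  qed
  ultimately show ?thesis
    using contains_bipartite_in_compl_if_anticomplete_pair[OF assms(3,4), of X Y "jahangir_edge s m"]
      assms(5) unfolding X_eq Y_eq by auto
qed

section \<open>The extremal graph and the Ramsey number\<close>

definition two_cliques :: "nat \<Rightarrow> nat \<Rightarrow> nat \<Rightarrow> bool" where
  "two_cliques c u v \<longleftrightarrow> u \<noteq> v \<and> (u < c \<longleftrightarrow> v < c)"

lemma tP_copy_on_one_side: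
  assumes "\<forall>x\<in>tP_verts t n. \<forall>y\<in>tP_verts t n. tP_edge x y \<longrightarrow> two_cliques c (f x) (f y)"
    "a < t" "i < n"
  shows "f (a, i) < c \<longleftrightarrow> f (a, 0) < c"
  using assms(3)
proof (induction i)
  case (Suc i)
  then have "(a, i) \<in> tP_verts t n" "(a, Suc i) \<in> tP_verts t n" "tP_edge (a, i) (a, Suc i)"
    using assms(2) by (simp_all add: tP_verts_def tP_edge_def)
  then have "two_cliques c (f (a, i)) (f (a, Suc i))" using assms(1) by blast
  with Suc show ?case by (simp add: two_cliques_def)
qed simp

lemma tP_not_in_two_cliques:
  assumes "N - c < n" "c < t * n"
  shows "\<not> contains_subgraph {0..<N} (two_cliques c) (tP_verts t n) tP_edge"
proof
  assume "contains_subgraph {0..<N} (two_cliques c) (tP_verts t n) tP_edge"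
  then obtain f where f: "inj_on f (tP_verts t n)" "f ` tP_verts t n \<subseteq> {0..<N}"
    "\<forall>x\<in>tP_verts t n. \<forall>y\<in>tP_verts t n. tP_edge x y \<longrightarrow> two_cliques c (f x) (f y)"
    unfolding contains_subgraph_def by blast
  have same_side: "f (a, i) < c \<longleftrightarrow> f (a, 0) < c" if "a < t" "i < n" for a i
    using tP_copy_on_one_side[OF f(3) that] .
  show False
  proof (cases "\<exists>a<t. c \<le> f (a, 0)")
    case True
    then obtain a where a: "a < t" "c \<le> f (a, 0)" by blast
    have "(\<lambda>i. f (a, i)) ` {0..<n} \<subseteq> {c..<N}"
    proof
      fix x assume "x \<in> (\<lambda>i. f (a, i)) ` {0..<n}"
      then obtain i where i: "i < n" "x = f (a, i)" by auto
      then have "(a, i) \<in> tP_verts t n" using a(1) by (simp add: tP_verts_def)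
      then show "x \<in> {c..<N}" using f(2) same_side[OF a(1) i(1)] a(2) i(2) by auto
    qed
    moreover have "inj_on (\<lambda>i. f (a, i)) {0..<n}"
    proof (rule inj_onI)
      fix i j assume "i \<in> {0..<n}" "j \<in> {0..<n}" "f (a, i) = f (a, j)"
      then show "i = j" using inj_onD[OF f(1), of "(a, i)" "(a, j)"] a(1) by (simp add: tP_verts_def)
    qed
    ultimately have "card {0..<n} \<le> card {c..<N}" by (meson card_inj_on_le finite_atLeastLessThan)
    then show False using assms(1) by simp
  next
    case False
    have "f ` tP_verts t n \<subseteq> {0..<c}"
    proof
      fix x assume "x \<in> f ` tP_verts t n"
      then obtain a i where ai: "a < t" "i < n" "x = f (a, i)" by (auto simp: tP_verts_def)
      then show "x \<in> {0..<c}" using False same_side[OF ai(1,2)] by auto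
    qed
    then have "card (tP_verts t n) \<le> card {0..<c}"
      using f(1) by (meson card_inj_on_le finite_atLeastLessThan)
    then show False using assms(2) by (simp add: tP_verts_def card_cartesian_product)
  qed
qed

lemma jahangir_colour_class_card:
  fixes col :: "nat \<Rightarrow> bool"
  assumes "s * m = 2 * k"
    "\<forall>x\<in>jahangir_verts s m. \<forall>y\<in>jahangir_verts s m. jahangir_edge s m x y \<longrightarrow> col x \<noteq> col y"
  shows "k \<le> card {j \<in> jahangir_verts s m. col j = b}"
proof -
  have alternate: "col j \<longleftrightarrow> (col 0 \<longleftrightarrow> even j)" if "j < 2 * k" for j
    using that
  proof (induction j)
    case (Suc j)
    then have "jahangir_edge s m j (Suc j)" unfolding jahangir_edge_def assms(1) by simp
    then have "col j \<noteq> col (Suc j)"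
      using assms Suc.prems unfolding jahangir_verts_def by simp
    with Suc show ?case by auto
  qed simp
  define r where "r = (if col 0 = b then 0 else 1 :: nat)"
  have "(\<lambda>i. 2 * i + r) ` {..<k} \<subseteq> {j \<in> jahangir_verts s m. col j = b}"
  proof
    fix x assume "x \<in> (\<lambda>i. 2 * i + r) ` {..<k}"
    then obtain i where i: "i < k" "x = 2 * i + r" by blast
    then have "x < 2 * k" unfolding r_def by simp
    then show "x \<in> {j \<in> jahangir_verts s m. col j = b}"
      using alternate[of x] i(2) unfolding jahangir_verts_def assms(1) r_def by auto
  qed
  moreover have "inj_on (\<lambda>i. 2 * i + r) {..<k}" by (simp add: inj_on_def)
  moreover have "finite {j \<in> jahangir_verts s m. col j = b}" by (simp add: jahangir_verts_def)
  ultimately have "card {..<k} \<le> card {j \<in> jahangir_verts s m. col j = b}"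
    by (meson card_inj_on_le)
  then show ?thesis by simp
qed

lemma jahangir_not_in_compl_two_cliques:
  assumes "s * m = 2 * k" "N - c < k"
  shows "\<not> contains_subgraph {0..<N} (compl_graph (two_cliques c)) (jahangir_verts s m)
           (jahangir_edge s m)"
proof
  assume "contains_subgraph {0..<N} (compl_graph (two_cliques c)) (jahangir_verts s m)
           (jahangir_edge s m)"
  then obtain f where f: "inj_on f (jahangir_verts s m)" "f ` jahangir_verts s m \<subseteq> {0..<N}"
    "\<forall>x\<in>jahangir_verts s m. \<forall>y\<in>jahangir_verts s m.
       jahangir_edge s m x y \<longrightarrow> compl_graph (two_cliques c) (f x) (f y)"
    unfolding contains_subgraph_def by blast
  define Y where "Y = {j \<in> jahangir_verts s m. \<not> f j < c}"
  have "k \<le> card Y" unfolding Y_def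
    using f(3) jahangir_colour_class_card[OF assms(1), of "\<lambda>j. f j < c" False]
    unfolding compl_graph_def two_cliques_def by auto
  moreover have "f ` Y \<subseteq> {c..<N}" using f(2) unfolding Y_def by auto
  moreover have "inj_on f Y" using f(1) unfolding Y_def by (rule inj_on_subset) auto
  ultimately show False using assms(2) card_inj_on_le[of f Y "{c..<N}"] by simp
qed

lemma not_ramsey_arrows_tP_jahangir:
  assumes "s * m = 2 * k" "1 \<le> k" "k \<le> n" "1 \<le> t * n" "N < t * n + k - 1"
  shows "\<not> ramsey_arrows N (tP_verts t n) tP_edge (jahangir_verts s m) (jahangir_edge s m)"
proof -
  define c where "c = t * n - 1"
  have "N - c < k" "N - c < n" "c < t * n" using assms unfolding c_def by linarith+
  moreover have "simple_graph {0..<N} (two_cliques c)"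
    unfolding simple_graph_def two_cliques_def by auto
  ultimately show ?thesis
    using tP_not_in_two_cliques jahangir_not_in_compl_two_cliques[OF assms(1)]
    unfolding ramsey_arrows_def by blast
qed

lemma ramsey_arrows_tP_jahangir:
  assumes "even s" "s * m = 2 * k" "1 \<le> k" "2 * (k * k) + k + 2 \<le> n"
  shows "ramsey_arrows (t * n + k - 1) (tP_verts t n) tP_edge (jahangir_verts s m) (jahangir_edge s m)"
  unfolding ramsey_arrows_def
proof (intro allI impI)
  fix E :: "nat \<Rightarrow> nat \<Rightarrow> bool"
  let ?V = "{0..<t * n + k - 1}"
  assume "simple_graph ?V E"
  then have "symp E" "irreflp E" unfolding simple_graph_def by (auto intro: sympI irreflpI)
  show "contains_subgraph ?V E (tP_verts t n) tP_edge \<or>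
        contains_subgraph ?V (compl_graph E) (jahangir_verts s m) (jahangir_edge s m)"
  proof (cases "has_anticomplete_pair E ?V k (Suc k)")
    case True
    then show ?thesis
      using jahangir_in_compl_if_anticomplete_pair[OF assms(1,2) _ \<open>symp E\<close>] by blast
  next
    case False
    then show ?thesis
      using contains_tP_if_no_anticomplete_pair[OF _ \<open>symp E\<close> \<open>irreflp E\<close> False _ assms(4)]
        assms(3) by simp
  qed
qed

lemma ramsey_number_eqI:
  assumes "ramsey_arrows N VG EG VH EH" "\<And>N'. N' < N \<Longrightarrow> \<not> ramsey_arrows N' VG EG VH EH"
  shows "ramsey_number VG EG VH EH = N"
  unfolding ramsey_number_def
  by (rule Least_equality) (use assms in \<open>auto simp: not_less[symmetric]\<close>)

lemma quadratic_bound_le: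
  fixes k :: nat
  assumes "3 \<le> k"
  shows "2 * (k * k) + k + 2 \<le> (k - 1) * (4 * k - 1) + 1"
proof -
  obtain j where "k = j + 3" using assms le_Suc_ex by (metis add.commute)
  then show ?thesis by (simp add: algebra_simps)
qed

theorem theorem3:
  fixes s m t n :: nat
  assumes "even s" and "s \<ge> 2" and "m \<ge> 3" and "t \<ge> 1"
    and "n \<ge> (s*m div 2 - 1) * (2*s*m - 1) + 1"
  shows "ramsey_number (tP_verts t n) tP_edge (jahangir_verts s m) (jahangir_edge s m)
         = t*n + s*m div 2 - 1"
proof -
  define k where "k = s * m div 2"
  have sm: "s * m = 2 * k" using assms(1) unfolding k_def by auto
  have "2 * 3 \<le> s * m" using assms(2,3) by (rule mult_le_mono)
  then have "3 \<le> k" using sm by linarith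
  have "2 * s * m = 4 * k" using sm by (simp add: mult.assoc)
  then have "(k - 1) * (4 * k - 1) + 1 \<le> n" using assms(5) unfolding k_def[symmetric] by argo
  moreover have "2 * (k * k) + k + 2 \<le> (k - 1) * (4 * k - 1) + 1"
    using \<open>3 \<le> k\<close> by (rule quadratic_bound_le)
  ultimately have n: "2 * (k * k) + k + 2 \<le> n" by linarith
  have "1 \<le> k" "k \<le> n" "1 \<le> t * n" using \<open>3 \<le> k\<close> n assms(4) by (simp_all add: Suc_le_eq)
  have "ramsey_number (tP_verts t n) tP_edge (jahangir_verts s m) (jahangir_edge s m) = t * n + k - 1"
  proof (rule ramsey_number_eqI)
    show "ramsey_arrows (t * n + k - 1) (tP_verts t n) tP_edge (jahangir_verts s m) (jahangir_edge s m)"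
      by (rule ramsey_arrows_tP_jahangir[OF assms(1) sm \<open>1 \<le> k\<close> n])
    show "\<not> ramsey_arrows N (tP_verts t n) tP_edge (jahangir_verts s m) (jahangir_edge s m)"
      if "N < t * n + k - 1" for N
      by (rule not_ramsey_arrows_tP_jahangir[OF sm \<open>1 \<le> k\<close> \<open>k \<le> n\<close> \<open>1 \<le> t * n\<close> that])
  qed
  then show ?thesis unfolding k_def .
qed

end
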